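(* Consider Model 3 (the risk-seeking insider model) with $N\ge1$ trading periods, as described in the context. A subgame perfect linear equilibrium exists. In this equilibrium there are real numbers $\beta_n,\lambda_n,\alpha_n,\delta_n,\Sigma_n$ such that for $n=1,\dots,N$: $x_n=\beta_n(v-p_{n-1})$, $p_n-p_{n-1}=\lambda_n y_n$, $\Sigma_n=\operatorname{Var}(v\mid y_1,\dots,y_n)$, and $$E\Big(\sum_{k=n}^N\pi_k\,\Big|\,p_1,\dots,p_{n-1},v\Big)=\alpha_{n-1}(v-p_{n-1})^2+\delta_{n-1},$$ where $$\delta_n=a_n\sigma_u\Delta t_N^{1/2}\Sigma_n^{1/2},\quad \alpha_n=b_n\sigma_u\Delta t_N^{1/2}\Sigma_n^{-1/2}\quad(n=0,\dots,N-1),\qquad \beta_n=c_n\sigma_u\Delta t_N^{1/2}\Sigma_{n-1}^{-1/2}\quad(n=1,\dots,N),$$ and the sequences $\{a_n\},\{b_n\},\{c_n\}$, with terminal values $a_{N-1}=0$, $b_{N-1}=\tfrac12$, $c_N=1$, satisfy for $n=1,\dots,N-1$ $$a_{n-1}=a_n\Big(\frac{1}{c_n^2+1}\Big)^{1/2}+b_n\Big(\frac{1}{c_n^2+1}\Big)^{3/2}c_n^2,\qquad b_{n-1}=b_n\Big(\frac{1}{c_n^2+1}\Big)^{3/2}+\frac{c_n}{c_n^2+1},\qquad -3b_nc_n+(c_n^2+1)^{1/2}(1-c_n^2)=0,$$ with $c_n>0$ for $n=1,\dots,N$.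
   Context: Model. Fix an integer $N\ge1$ and put $\Delta t_N=1/N$. A risky asset has liquidation value $v\sim N(p_0,\Sigma_0)$ with $\Sigma_0>0$. In each period $n=1,\dots,N$ noise traders submit $u_n\sim N(0,\sigma_u^2\Delta t_N)$ ($\sigma_u>0$), i.i.d. and independent of $v$. The insider knows $v$ and submits $x_n=\beta_n(v-p_{n-1})$ with $\beta_n\in\mathbb R$. The market maker observes $y_n=x_n+u_n$ and sets $p_n=E[v\mid y_1,\dots,y_n]$. The insider's profit in period $n$ is $\pi_n=x_n(v-p_n)$ and $\Sigma_n=\operatorname{Var}(v\mid y_1,\dots,y_n)$. For such strategies, with $\lambda_n=\beta_n\Sigma_{n-1}/(\beta_n^2\Sigma_{n-1}+\sigma_u^2\Delta t_N)$ one has $p_n-p_{n-1}=\lambda_ny_n$, $\Sigma_n=\Sigma_{n-1}\sigma_u^2\Delta t_N/(\beta_n^2\Sigma_{n-1}+\sigma_u^2\Delta t_N)$, and $E(\sum_{k=n}^N\pi_k\mid p_1,\dots,p_{n-1},v)=\alpha_{n-1}(v-p_{n-1})^2+\delta_{n-1}$ with $\alpha_N=\delta_N=0$, $\alpha_{n-1}=\alpha_n(1-\lambda_n\beta_n)^2+\beta_n(1-\lambda_n\beta_n)$, $\delta_{n-1}=\delta_n+\alpha_n\lambda_n^2\sigma_u^2\Delta t_N$. Here $\alpha_{n-1}(v-p_{n-1})^2$ is the "risky profit" and $\delta_{n-1}$ the "guaranteed profit". Equilibrium. An insider strategy specifies, for each period $n$ and each value $\Sigma_{n-1}>0$, an intensity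 $\beta_n$. Given the strategy for periods $n+1,\dots,N$, each choice of $\beta_n$ determines (with later intensities given by the strategy applied to the resulting variances) $\alpha_{n-1},\delta_{n-1}$ as functions of $\beta_n$ and $\Sigma_{n-1}$. A subgame perfect linear equilibrium of Model 3 is a strategy such that for every $n$ and every $\Sigma_{n-1}>0$ the prescribed $\beta_n$ first maximizes the risky profit $\alpha_{n-1}(v-p_{n-1})^2$ (i.e. maximizes $\alpha_{n-1}$) over $\beta_n\in\mathbb R$, and among those maximizers maximizes the guaranteed profit $\delta_{n-1}$, with the market maker pricing efficiently given this strategy. *)

theory Defs
  imports Complex_Main
begin

text \<open>Noise variance per period is
  s2 = sigma_u^2 * Delta t_N. A strategy is B :: nat => real => real, where
  B n S is the intensity beta_n chosen in period n when Sigma_{n-1} = S.\<close>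

definition lam_of :: "real \<Rightarrow> real \<Rightarrow> real \<Rightarrow> real" where
  "lam_of s2 b S = b * S / (b\<^sup>2 * S + s2)"

definition Sig_next :: "real \<Rightarrow> real \<Rightarrow> real \<Rightarrow> real" where
  "Sig_next s2 b S = S * s2 / (b\<^sup>2 * S + s2)"

text \<open>One backward step: given (alpha_n, delta_n) as a function g of Sigma_n,
  the intensity b = beta_n and Sigma_{n-1} = S, compute (alpha_{n-1}, delta_{n-1}).\<close>
definition step :: "real \<Rightarrow> (real \<Rightarrow> real \<times> real) \<Rightarrow> real \<Rightarrow> real \<Rightarrow> real \<times> real" where
  "step s2 g b S =
     (let l = lam_of s2 b S; S' = Sig_next s2 b S; ad = g S'
      in (fst ad * (1 - l * b)\<^sup>2 + b * (1 - l * b), snd ad + fst ad * l\<^sup>2 * s2))"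

text \<open>ADk s2 B N k S = (alpha_{N-k}, delta_{N-k}) as function of Sigma_{N-k} = S,
  when the strategy B is followed in periods N-k+1, ..., N.\<close>
primrec ADk :: "real \<Rightarrow> (nat \<Rightarrow> real \<Rightarrow> real) \<Rightarrow> nat \<Rightarrow> nat \<Rightarrow> real \<Rightarrow> real \<times> real" where
  "ADk s2 B N 0 S = (0, 0)"
| "ADk s2 B N (Suc k) S = step s2 (ADk s2 B N k) (B (N - k) S) S"

definition alpha_delta :: "real \<Rightarrow> (nat \<Rightarrow> real \<Rightarrow> real) \<Rightarrow> nat \<Rightarrow> nat \<Rightarrow> real \<Rightarrow> real \<times> real" where
  "alpha_delta s2 B N n S = ADk s2 B N (N - n) S"

text \<open>(alpha_{n-1}, delta_{n-1}) when in period n the intensity b is used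
  (with Sigma_{n-1} = S), and B is followed in periods n+1..N.\<close>
definition dev :: "real \<Rightarrow> (nat \<Rightarrow> real \<Rightarrow> real) \<Rightarrow> nat \<Rightarrow> nat \<Rightarrow> real \<Rightarrow> real \<Rightarrow> real \<times> real" where
  "dev s2 B N n S b = step s2 (alpha_delta s2 B N n) b S"

text \<open>Subgame perfect linear equilibrium of Model 3: lexicographic maximisation,
  first of the risky profit coefficient alpha_{n-1}, then of delta_{n-1}.\<close>
definition spe :: "real \<Rightarrow> (nat \<Rightarrow> real \<Rightarrow> real) \<Rightarrow> nat \<Rightarrow> bool" where
  "spe s2 B N \<longleftrightarrow>
    (\<forall>n\<in>{1..N}. \<forall>S>0.
       (\<forall>b. fst (dev s2 B N n S b) \<le> fst (dev s2 B N n S (B n S))) \<and>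
       (\<forall>b. fst (dev s2 B N n S b) = fst (dev s2 B N n S (B n S)) \<longrightarrow>
            snd (dev s2 B N n S b) \<le> snd (dev s2 B N n S (B n S))))"

primrec Sig_path :: "real \<Rightarrow> (nat \<Rightarrow> real \<Rightarrow> real) \<Rightarrow> real \<Rightarrow> nat \<Rightarrow> real" where
  "Sig_path s2 B S0 0 = S0"
| "Sig_path s2 B S0 (Suc n) =
     Sig_next s2 (B (Suc n) (Sig_path s2 B S0 n)) (Sig_path s2 B S0 n)"

end

theory Submission
  imports Defs
begin

text \<open>Everything scales with \<open>k = \<sigma>\<^sub>u \<Delta>t\<^sup>1\<^sup>/\<^sup>2 \<Sigma>\<^sup>-\<^sup>1\<^sup>/\<^sup>2\<close>: if the continuation value has the form
  \<open>\<alpha> = b \<sigma>\<^sub>u \<Delta>t\<^sup>1\<^sup>/\<^sup>2 \<Sigma>\<^sup>-\<^sup>1\<^sup>/\<^sup>2\<close>, \<open>\<delta> = a \<sigma>\<^sub>u \<Delta>t\<^sup>1\<^sup>/\<^sup>2 \<Sigma>\<^sup>1\<^sup>/\<^sup>2\<close>, then an intensity \<open>\<beta> = x k\<close> yields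
  \<open>\<alpha>' = k G\<^sub>b(x)\<close> and \<open>\<delta>' = \<sigma>\<^sub>u \<Delta>t\<^sup>1\<^sup>/\<^sup>2 \<Sigma>\<^sup>1\<^sup>/\<^sup>2 H\<^sub>a\<^sub>,\<^sub>b(x)\<close>, the same form one period earlier.
  Since \<open>G\<^sub>b'(x)\<close> has the sign of \<open>h\<^sub>b(x) = (x\<^sup>2+1)\<^sup>1\<^sup>/\<^sup>2(1-x\<^sup>2) - 3bx\<close>, which for \<open>b \<ge> 0\<close>
  strictly decreases on \<open>[0,\<infinity>)\<close> from \<open>1\<close>, and \<open>G\<^sub>b(x) < G\<^sub>b(-x)\<close> for \<open>x < 0\<close>, the unique
  maximiser of \<open>G\<^sub>b\<close> is the positive root \<open>c\<close> of \<open>h\<^sub>b\<close>. Choosing it in every period, the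
  coefficients obey \<open>b' = G\<^sub>b(c) \<ge> 0\<close>, \<open>a' = H\<^sub>a\<^sub>,\<^sub>b(c)\<close>, and a unique maximiser of the risky
  profit makes the tie-breaking by the guaranteed profit vacuous.\<close>

definition alpha_gain :: "real \<Rightarrow> real \<Rightarrow> real" where
  "alpha_gain b x = b / ((x\<^sup>2 + 1) * sqrt (x\<^sup>2 + 1)) + x / (x\<^sup>2 + 1)"

definition delta_gain :: "real \<Rightarrow> real \<Rightarrow> real \<Rightarrow> real" where
  "delta_gain a b x = a / sqrt (x\<^sup>2 + 1) + b * x\<^sup>2 / ((x\<^sup>2 + 1) * sqrt (x\<^sup>2 + 1))"

definition foc :: "real \<Rightarrow> real \<Rightarrow> real" where
  "foc b x = sqrt (x\<^sup>2 + 1) * (1 - x\<^sup>2) - 3 * b * x"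

definition opt_intensity :: "real \<Rightarrow> real" where
  "opt_intensity b = (THE c. 0 \<le> c \<and> foc b c = 0)"

lemma square_plus_one_pos: "(x::real)\<^sup>2 + 1 > 0"
  by (simp add: add_nonneg_pos)

lemma alpha_gain_has_derivative:
  "(alpha_gain b has_real_derivative foc b x / ((x\<^sup>2 + 1)\<^sup>2 * sqrt (x\<^sup>2 + 1))) (at x)"
proof -
  have p: "x\<^sup>2 + 1 > 0" by (rule square_plus_one_pos)
  then have q: "sqrt (x\<^sup>2 + 1) > 0" and qq: "sqrt (x\<^sup>2 + 1) ^ 2 = x\<^sup>2 + 1" by simp_all
  show ?thesis unfolding alpha_gain_def
    apply (rule derivative_eq_intros refl | use q p in force)+
    using q p qq unfolding foc_def
    by (simp add: inverse_eq_divide divide_simps) (simp add: algebra_simps power2_eq_square)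
qed

lemma foc_has_derivative:
  "(foc b has_real_derivative - (x * (1 + 3 * x\<^sup>2)) / sqrt (x\<^sup>2 + 1) - 3 * b) (at x)"
proof -
  have p: "x\<^sup>2 + 1 > 0" by (rule square_plus_one_pos)
  then have q: "sqrt (x\<^sup>2 + 1) > 0" and qq: "sqrt (x\<^sup>2 + 1) ^ 2 = x\<^sup>2 + 1" by simp_all
  show ?thesis unfolding foc_def
    apply (rule derivative_eq_intros refl | use q p in force)+
    using q p qq
    by (simp add: inverse_eq_divide divide_simps) (simp add: algebra_simps power2_eq_square)
qed

lemma continuous_on_alpha_gain: "continuous_on A (alpha_gain b)"
  by (meson DERIV_isCont continuous_at_imp_continuous_on alpha_gain_has_derivative)

lemma continuous_on_foc: "continuous_on A (foc b)"
  by (meson DERIV_isCont continuous_at_imp_continuous_on foc_has_derivative)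

lemma foc_strict_antimono:
  assumes "b \<ge> 0" "0 \<le> x" "x < y"
  shows "foc b y < foc b x"
proof (rule DERIV_neg_imp_decreasing_open[OF assms(3) _ continuous_on_foc])
  fix z assume z: "x < z" "z < y"
  have "z * (1 + 3 * z\<^sup>2) > 0" using z assms by (simp add: add_pos_nonneg)
  then have "z * (1 + 3 * z\<^sup>2) / sqrt (z\<^sup>2 + 1) > 0"
    using square_plus_one_pos[of z] by simp
  then show "\<exists>d. (foc b has_real_derivative d) (at z) \<and> d < 0"
    using foc_has_derivative assms(1) by force
qed

lemma foc_unique_nonneg_root:
  assumes "b \<ge> 0" "0 \<le> c" "foc b c = 0" "0 \<le> d" "foc b d = 0"
  shows "c = d"
  using foc_strict_antimono[OF assms(1), of c d] foc_strict_antimono[OF assms(1), of d c] assms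
  by (cases c d rule: linorder_cases) auto

lemma opt_intensity:
  assumes "b \<ge> 0"
  shows opt_intensity_pos: "opt_intensity b > 0"
    and foc_opt_intensity: "foc b (opt_intensity b) = 0"
proof -
  have "foc b 1 \<le> 0" "0 \<le> foc b 0" using assms by (auto simp: foc_def)
  then obtain c where c: "0 \<le> c" "foc b c = 0"
    using IVT2'[OF _ _ zero_le_one continuous_on_foc] by blast
  have "opt_intensity b = c" unfolding opt_intensity_def
    by (rule the_equality) (use c foc_unique_nonneg_root[OF assms] in blast)+
  moreover have "c \<noteq> 0" using c by (auto simp: foc_def)
  ultimately show "opt_intensity b > 0" "foc b (opt_intensity b) = 0" using c by auto
qed

lemma opt_intensity_0: "opt_intensity 0 = 1"
  using foc_unique_nonneg_root[of 0 "opt_intensity 0" 1] opt_intensity[of 0]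
  by (simp add: foc_def)

lemma alpha_gain_unique_max:
  assumes "b \<ge> 0" "x \<noteq> opt_intensity b"
  shows "alpha_gain b x < alpha_gain b (opt_intensity b)"
proof -
  let ?c = "opt_intensity b"
  have c: "0 < ?c" "foc b ?c = 0" using opt_intensity[OF assms(1)] by auto
  have den: "(z\<^sup>2 + 1)\<^sup>2 * sqrt (z\<^sup>2 + 1) > 0" for z
    using square_plus_one_pos[of z] by simp
  have sign: "foc b z / ((z\<^sup>2 + 1)\<^sup>2 * sqrt (z\<^sup>2 + 1)) > 0 \<longleftrightarrow> foc b z > 0"
    "foc b z / ((z\<^sup>2 + 1)\<^sup>2 * sqrt (z\<^sup>2 + 1)) < 0 \<longleftrightarrow> foc b z < 0" for z
    using den[of z] by (simp_all add: zero_less_divide_iff divide_less_0_iff)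
  have below: "alpha_gain b z < alpha_gain b ?c" if "0 \<le> z" "z < ?c" for z
  proof (rule DERIV_pos_imp_increasing_open[OF that(2) _ continuous_on_alpha_gain])
    fix w assume "z < w" "w < ?c"
    then have "foc b w > 0" using foc_strict_antimono[OF assms(1), of w ?c] c that by auto
    then show "\<exists>d. (alpha_gain b has_real_derivative d) (at w) \<and> d > 0"
      using alpha_gain_has_derivative sign by blast
  qed
  have above: "alpha_gain b z < alpha_gain b ?c" if "?c < z" for z
  proof (rule DERIV_neg_imp_decreasing_open[OF that _ continuous_on_alpha_gain])
    fix w assume "?c < w" "w < z"
    then have "foc b w < 0" using foc_strict_antimono[OF assms(1), of ?c w] c by auto
    then show "\<exists>d. (alpha_gain b has_real_derivative d) (at w) \<and> d < 0"
      using alpha_gain_has_derivative sign by blast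
  qed
  have nonneg: "alpha_gain b z \<le> alpha_gain b ?c" if "0 \<le> z" for z
    using below[OF that] above by (cases z ?c rule: linorder_cases) (auto intro: less_imp_le)
  show ?thesis
  proof (cases "x \<ge> 0")
    case True
    then show ?thesis using below above assms(2) by (cases x ?c rule: linorder_cases) auto
  next
    case False
    then have "x / (x\<^sup>2 + 1) < - x / (x\<^sup>2 + 1)"
      using square_plus_one_pos[of x] by (simp add: divide_less_0_iff)
    then have "alpha_gain b x < alpha_gain b (- x)" by (simp add: alpha_gain_def)
    with nonneg[of "- x"] False show ?thesis by linarith
  qed
qed

lemma step_scaled:
  assumes s2: "s2 > 0" and S: "S > 0"
    and g: "\<And>S'. S' > 0 \<Longrightarrow> g S' = (b * sqrt (s2 / S'), a * sqrt (s2 * S'))"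
  shows "step s2 g (x * sqrt (s2 / S)) S
           = (sqrt (s2 / S) * alpha_gain b x, sqrt (s2 * S) * delta_gain a b x)"
proof -
  define k where "k = sqrt (s2 / S)"
  define q where "q = sqrt (x\<^sup>2 + 1)"
  have k: "k > 0" and s2_eq: "s2 = k\<^sup>2 * S" using s2 S by (simp_all add: k_def)
  have q: "q > 0" "q\<^sup>2 = x\<^sup>2 + 1" using square_plus_one_pos[of x] by (simp_all add: q_def)
  have kS: "sqrt (s2 * S) = k * S"
    using k S by (simp add: s2_eq power2_eq_square real_sqrt_mult)
  have denom: "(x * k)\<^sup>2 * S + s2 = s2 * q\<^sup>2"
    by (simp add: s2_eq q(2) algebra_simps power_mult_distrib)
  have "lam_of s2 (x * k) S = x * k * S / (s2 * q\<^sup>2)"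
    by (simp add: lam_of_def denom)
  also have "\<dots> = x / (k * q\<^sup>2)"
    using k S q(1) by (simp add: s2_eq field_simps power2_eq_square)
  finally have lam: "lam_of s2 (x * k) S = x / (k * q\<^sup>2)" .
  have Sig: "Sig_next s2 (x * k) S = S / q\<^sup>2"
    using s2 q(1) unfolding Sig_next_def denom by (simp add: field_simps)
  have "s2 / (S / q\<^sup>2) = (k * q)\<^sup>2" "s2 * (S / q\<^sup>2) = (k * S / q)\<^sup>2"
    using S q by (simp_all add: s2_eq field_simps power2_eq_square)
  moreover have "S / q\<^sup>2 > 0" using S q(1) by simp
  ultimately have cont: "g (S / q\<^sup>2) = (b * (k * q), a * (k * S / q))"
    using g[of "S / q\<^sup>2"] S q(1) k by simp
  have one_minus: "1 - x / (k * q\<^sup>2) * (x * k) = 1 / q\<^sup>2"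
    using k square_plus_one_pos[of x] mult_pos_pos[OF k square_plus_one_pos[of x]] unfolding q(2)
    by (simp add: field_simps power2_eq_square)
  have "step s2 g (x * k) S
          = (b * (k * q) * (1 / q\<^sup>2)\<^sup>2 + x * k * (1 / q\<^sup>2),
             a * (k * S / q) + b * (k * q) * (x / (k * q\<^sup>2))\<^sup>2 * s2)"
    unfolding step_def Let_def lam Sig cont one_minus by simp
  also have "\<dots> = (k * alpha_gain b x, k * S * delta_gain a b x)"
    using k q unfolding alpha_gain_def delta_gain_def q_def[symmetric] q(2)[symmetric]
    by (simp add: s2_eq field_simps power2_eq_square)
  finally show ?thesis by (simp add: k_def kS)
qed

lemma spe_if_strict_risky_max:
  assumes "\<And>n S b. n \<in> {1..N} \<Longrightarrow> S > 0 \<Longrightarrow> b \<noteq> B n S \<Longrightarrow>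
             fst (dev s2 B N n S b) < fst (dev s2 B N n S (B n S))"
  shows "spe s2 B N"
  unfolding spe_def
proof (intro ballI allI impI conjI)
  fix n S b assume "n \<in> {1..N}" "(S::real) > 0"
  with assms[of n S b] show "fst (dev s2 B N n S b) \<le> fst (dev s2 B N n S (B n S))"
    by (cases "b = B n S") auto
  show "snd (dev s2 B N n S b) \<le> snd (dev s2 B N n S (B n S))"
    if "fst (dev s2 B N n S b) = fst (dev s2 B N n S (B n S))"
    using that assms[of n S b] \<open>n \<in> {1..N}\<close> \<open>S > 0\<close> by (cases "b = B n S") auto
qed

text \<open>\<open>coefs k = (a, b)\<close> are the normalised coefficients of \<open>\<delta>\<close> and \<open>\<alpha>\<close> with \<open>k\<close> periods left.\<close>

primrec coefs :: "nat \<Rightarrow> real \<times> real" where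
  "coefs 0 = (0, 0)"
| "coefs (Suc k) =
     (case coefs k of (a, b) \<Rightarrow>
        (delta_gain a b (opt_intensity b), alpha_gain b (opt_intensity b)))"

definition coef_a :: "nat \<Rightarrow> real" where "coef_a k = fst (coefs k)"
definition coef_b :: "nat \<Rightarrow> real" where "coef_b k = snd (coefs k)"

lemma coef_0: "coef_a 0 = 0" "coef_b 0 = 0"
  by (simp_all add: coef_a_def coef_b_def)

lemma coef_Suc:
  "coef_a (Suc k) = delta_gain (coef_a k) (coef_b k) (opt_intensity (coef_b k))"
  "coef_b (Suc k) = alpha_gain (coef_b k) (opt_intensity (coef_b k))"
  by (simp_all add: coef_a_def coef_b_def split: prod.split)

lemma coef_1: "coef_a 1 = 0" "coef_b 1 = 1 / 2"
  by (simp_all add: coef_Suc coef_0 opt_intensity_0 alpha_gain_def delta_gain_def)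

lemma coef_b_nonneg: "coef_b k \<ge> 0"
proof (induction k)
  case 0 then show ?case by (simp add: coef_0)
next
  case (Suc k)
  let ?c = "opt_intensity (coef_b k)"
  have "?c > 0" using opt_intensity_pos[OF Suc] .
  moreover have "sqrt (?c\<^sup>2 + 1) > 0" using square_plus_one_pos[of ?c] by simp
  ultimately show ?case
    using Suc square_plus_one_pos[of ?c] by (simp add: coef_Suc alpha_gain_def)
qed

lemma one_over_powr_half: "y > 0 \<Longrightarrow> (1 / y) powr (1 / 2) = 1 / sqrt (y::real)"
  by (simp add: powr_half_sqrt real_sqrt_divide)

lemma one_over_powr_three_halves: "y > 0 \<Longrightarrow> (1 / y) powr (3 / 2) = 1 / (y * sqrt (y::real))"
  using powr_add[of "1 / y" 1 "1 / 2"] by (simp add: one_over_powr_half)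

lemma coef_recursion:
  fixes k :: nat
  defines "c \<equiv> opt_intensity (coef_b k)"
  shows "coef_a (Suc k) = coef_a k * (1 / (c ^ 2 + 1)) powr (1 / 2)
                          + coef_b k * (1 / (c ^ 2 + 1)) powr (3 / 2) * c ^ 2"
    and "coef_b (Suc k) = coef_b k * (1 / (c ^ 2 + 1)) powr (3 / 2) + c / (c ^ 2 + 1)"
    and "- 3 * coef_b k * c + (c ^ 2 + 1) powr (1 / 2) * (1 - c ^ 2) = 0"
  using foc_opt_intensity[OF coef_b_nonneg, of k] square_plus_one_pos[of c]
  by (simp_all add: coef_Suc c_def [symmetric] delta_gain_def alpha_gain_def foc_def
      one_over_powr_half one_over_powr_three_halves powr_half_sqrt real_sqrt_divide)

definition eq_strategy :: "real \<Rightarrow> nat \<Rightarrow> nat \<Rightarrow> real \<Rightarrow> real" where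
  "eq_strategy s2 N n S = opt_intensity (coef_b (N - n)) * sqrt (s2 / S)"

lemma ADk_eq_strategy:
  assumes "s2 > 0" "k \<le> N" "S > 0"
  shows "ADk s2 (eq_strategy s2 N) N k S = (coef_b k * sqrt (s2 / S), coef_a k * sqrt (s2 * S))"
  using assms(2,3)
proof (induction k arbitrary: S)
  case 0 then show ?case by (simp add: coef_0)
next
  case (Suc k)
  have strategy: "eq_strategy s2 N (N - k) S = opt_intensity (coef_b k) * sqrt (s2 / S)"
    using Suc.prems(1) by (simp add: eq_strategy_def)
  have IH: "ADk s2 (eq_strategy s2 N) N k S' = (coef_b k * sqrt (s2 / S'), coef_a k * sqrt (s2 * S'))"
    if "S' > 0" for S'
    using Suc that by simp
  have "ADk s2 (eq_strategy s2 N) N (Suc k) S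
          = step s2 (ADk s2 (eq_strategy s2 N) N k) (opt_intensity (coef_b k) * sqrt (s2 / S)) S"
    by (simp add: strategy)
  also have "\<dots> = (sqrt (s2 / S) * coef_b (Suc k), sqrt (s2 * S) * coef_a (Suc k))"
    unfolding coef_Suc by (rule step_scaled[OF assms(1) Suc.prems(2) IH])
  finally show ?case by (simp add: mult.commute)
qed

lemma alpha_delta_eq_strategy:
  assumes "s2 > 0" "S > 0"
  shows "alpha_delta s2 (eq_strategy s2 N) N n S
           = (coef_b (N - n) * sqrt (s2 / S), coef_a (N - n) * sqrt (s2 * S))"
  unfolding alpha_delta_def using ADk_eq_strategy[OF assms(1) _ assms(2)] by simp

lemma Sig_path_pos: "s2 > 0 \<Longrightarrow> S0 > 0 \<Longrightarrow> Sig_path s2 B S0 n > 0"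
  by (induction n) (simp_all add: Sig_next_def add_nonneg_pos)

lemma spe_eq_strategy:
  assumes "s2 > 0"
  shows "spe s2 (eq_strategy s2 N) N"
proof (rule spe_if_strict_risky_max)
  fix n S b assume "n \<in> {1..N}" and S: "(S::real) > 0" and b: "b \<noteq> eq_strategy s2 N n S"
  define k where "k = sqrt (s2 / S)"
  define \<beta> where "\<beta> = coef_b (N - n)"
  have k: "k > 0" using assms S by (simp add: k_def)
  have cont: "alpha_delta s2 (eq_strategy s2 N) N n S'
                = (\<beta> * sqrt (s2 / S'), coef_a (N - n) * sqrt (s2 * S'))" if "S' > 0" for S'
    using alpha_delta_eq_strategy[OF assms that] by (simp add: \<beta>_def)
  have dev_fst: "fst (dev s2 (eq_strategy s2 N) N n S (x * k)) = k * alpha_gain \<beta> x" for x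
    using step_scaled[OF assms S cont] by (simp add: dev_def k_def)
  have "b / k \<noteq> opt_intensity \<beta>"
    using b k by (auto simp: eq_strategy_def k_def [symmetric] \<beta>_def [symmetric] field_simps)
  then have "k * alpha_gain \<beta> (b / k) < k * alpha_gain \<beta> (opt_intensity \<beta>)"
    using alpha_gain_unique_max[OF coef_b_nonneg] k by (simp add: \<beta>_def)
  moreover have "eq_strategy s2 N n S = opt_intensity \<beta> * k"
    by (simp add: eq_strategy_def k_def \<beta>_def)
  ultimately show "fst (dev s2 (eq_strategy s2 N) N n S b)
                   < fst (dev s2 (eq_strategy s2 N) N n S (eq_strategy s2 N n S))"
    using dev_fst[of "b / k"] dev_fst[of "opt_intensity \<beta>"] k by simp
qed

theorem theorem5:
  fixes N :: nat and sigma_u Sigma0 :: real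
  assumes "N \<ge> 1" and "sigma_u > 0" and "Sigma0 > 0"
  defines "dt \<equiv> 1 / real N"
  defines "s2 \<equiv> sigma_u\<^sup>2 * dt"
  shows "\<exists>B :: nat \<Rightarrow> real \<Rightarrow> real. \<exists>a b c :: nat \<Rightarrow> real.
    spe s2 B N \<and>
    a (N - 1) = 0 \<and> b (N - 1) = 1 / 2 \<and> c N = 1 \<and>
    (\<forall>n\<in>{1..N - 1}.
       a (n - 1) = a n * (1 / (c n ^ 2 + 1)) powr (1 / 2)
                   + b n * (1 / (c n ^ 2 + 1)) powr (3 / 2) * c n ^ 2 \<and>
       b (n - 1) = b n * (1 / (c n ^ 2 + 1)) powr (3 / 2) + c n / (c n ^ 2 + 1) \<and>
       - 3 * b n * c n + (c n ^ 2 + 1) powr (1 / 2) * (1 - c n ^ 2) = 0) \<and>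
    (\<forall>n\<in>{1..N}. c n > 0) \<and>
    (let Sig = Sig_path s2 B Sigma0 in
      (\<forall>n\<in>{0..N - 1}.
         snd (alpha_delta s2 B N n (Sig n)) = a n * sigma_u * sqrt dt * sqrt (Sig n) \<and>
         fst (alpha_delta s2 B N n (Sig n)) = b n * sigma_u * sqrt dt / sqrt (Sig n)) \<and>
      (\<forall>n\<in>{1..N}. B n (Sig (n - 1)) = c n * sigma_u * sqrt dt / sqrt (Sig (n - 1))))"
proof -
  have s2: "s2 > 0" and sqrt_s2: "sqrt s2 = sigma_u * sqrt dt"
    using assms(1,2) by (simp_all add: s2_def dt_def real_sqrt_mult real_sqrt_divide)
  let ?B = "eq_strategy s2 N"
  have Sig: "Sig_path s2 ?B Sigma0 n > 0" for n using Sig_path_pos[OF s2 assms(3)] .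
  have "N - (N - 1) = 1" using assms(1) by simp
  moreover have "N - (n - 1) = Suc (N - n)" if "n \<in> {1..N - 1}" for n using that by auto
  ultimately show ?thesis
    using spe_eq_strategy[OF s2] coef_1 coef_recursion opt_intensity_pos[OF coef_b_nonneg] Sig
    by (intro exI[of _ ?B] exI[of _ "\<lambda>n. coef_a (N - n)"] exI[of _ "\<lambda>n. coef_b (N - n)"]
        exI[of _ "\<lambda>n. opt_intensity (coef_b (N - n))"])
      (simp add: coef_0 opt_intensity_0 alpha_delta_eq_strategy[OF s2] eq_strategy_def
        real_sqrt_mult real_sqrt_divide sqrt_s2)
qed

end
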